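(* Let $n\ge2$, $\phi\in\mathrm{End}(F_n)$, and let $(X,x_1)\to(R_n,* )$ be the finite based cover associated to a finite-index fully characteristic subgroup $K\le F_n$, with deck group $\Gamma=F_n/K$. If the endomorphism of $\Gamma$ induced by $\phi$ is not the identity, then the endomorphism of $H_1(X,\mathbb{Z})$ induced by $\phi$ is not the identity.
   Context: $F_n$ is the free group of rank $n\ge2$, identified with $\pi_1(R_n,* )$ where $R_n$ is the wedge of $n$ circles with wedge point $*$. A subgroup $K\le F_n$ is fully characteristic if $\phi(K)\subseteq K$ for all $\phi\in\mathrm{End}(F_n)$; then every $\phi\in\mathrm{End}(F_n)$ induces an endomorphism of $\Gamma=F_n/K$. The based cover associated to $K$ is the connected covering $p:(X,x_1)\to(R_n,* )$ with $p_*\pi_1(X,x_1)=K$, with deck group $\Gamma$. The endomorphism of $H_1(X,\mathbb{Z})\cong K^{ab}$ induced by $\phi$ is the abelianization of $\phi|_K:K\to K$. *)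

theory Defs
  imports "HOL-Algebra.Algebra"
begin

text \<open>A letter (i, True) stands for the generator x_i, (i, False) for its inverse.
  The generators are x_0, ..., x_(n-1).\<close>

type_synonym letter = "nat \<times> bool"

definition inv_letter :: "letter \<Rightarrow> letter" where
  "inv_letter a = (fst a, \<not> snd a)"

fun free_reduce :: "letter list \<Rightarrow> letter list" where
  "free_reduce [] = []"
| "free_reduce (a # w) =
     (case free_reduce w of
        [] \<Rightarrow> [a]
      | b # w' \<Rightarrow> (if b = inv_letter a then w' else a # b # w'))"

definition reduced_word :: "letter list \<Rightarrow> bool" where
  "reduced_word w \<longleftrightarrow> (\<forall>i. Suc i < length w \<longrightarrow> w ! Suc i \<noteq> inv_letter (w ! i))"

definition free_group :: "nat \<Rightarrow> letter list monoid" where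
  "free_group n =
     \<lparr> carrier = {w. reduced_word w \<and> (\<forall>a\<in>set w. fst a < n)},
       monoid.mult = (\<lambda>u v. free_reduce (u @ v)),
       monoid.one = [] \<rparr>"

definition fully_characteristic :: "('a, 'b) monoid_scheme \<Rightarrow> 'a set \<Rightarrow> bool" where
  "fully_characteristic G K \<longleftrightarrow> subgroup K G \<and> (\<forall>\<phi>\<in>hom G G. \<phi> ` K \<subseteq> K)"

definition quot_endo :: "('a, 'b) monoid_scheme \<Rightarrow> 'a set \<Rightarrow> ('a \<Rightarrow> 'a) \<Rightarrow> 'a set \<Rightarrow> 'a set" where
  "quot_endo G K \<phi> C = K #>\<^bsub>G\<^esub> \<phi> (SOME g. g \<in> C)"

definition abelianization_sub :: "('a, 'b) monoid_scheme \<Rightarrow> 'a set \<Rightarrow> 'a set monoid" where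
  "abelianization_sub G K = (G\<lparr>carrier := K\<rparr>) Mod derived (G\<lparr>carrier := K\<rparr>) K"

definition ab_endo :: "('a, 'b) monoid_scheme \<Rightarrow> 'a set \<Rightarrow> ('a \<Rightarrow> 'a) \<Rightarrow> 'a set \<Rightarrow> 'a set" where
  "ab_endo G K \<phi> C = derived (G\<lparr>carrier := K\<rparr>) K #>\<^bsub>G\<lparr>carrier := K\<rparr>\<^esub> \<phi> (SOME k. k \<in> C)"

end

theory Submission
  imports Defs
begin

text \<open>Suppose \<open>\<phi>\<close> acts trivially on \<open>H\<^sub>1(X) = K\<^sup>a\<^sup>b\<close>. For a set \<open>P\<close> of vertices
  of \<open>X\<close> and a generator \<open>x\<^sub>i\<close>, the signed number of \<open>x\<^sub>i\<close>-edges starting in \<open>P\<close>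
  traversed by a loop is a homomorphism \<open>K \<rightarrow> \<int>\<close> factoring through \<open>H\<^sub>1(X)\<close>, hence is
  \<open>\<phi>\<close>-invariant. Conjugating a loop by \<open>g\<close> translates \<open>P\<close> by \<open>g\<close>, and
  \<open>\<phi>(g k g\<inverse>) = \<phi>(g) \<phi>(k) \<phi>(g)\<inverse>\<close>; so for \<open>s = g\<inverse>\<phi>(g)\<close> every loop crosses as many
  \<open>x\<^sub>i\<close>-edges at the base vertex \<open>K\<close> as at the vertex \<open>s\<inverse>K\<close>. The loop \<open>x\<^sub>i\<^sup>p\<close>, with
  \<open>p\<close> least such that \<open>x\<^sub>i\<^sup>p \<in> K\<close>, crosses one edge at the base vertex, hence also passes
  through \<open>s\<inverse>K\<close>: \<open>s x\<^sub>i\<^sup>r \<in> K\<close> for some \<open>0 < r < p\<close>. Applying the endomorphism that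
  kills \<open>x\<^sub>1\<close> to these conditions for \<open>i = 0, 1\<close> gives \<open>x\<^sub>0\<^sup>r \<in> K\<close> with \<open>0 < r < p\<close>,
  a contradiction unless \<open>s \<in> K\<close> for all \<open>g\<close>, i.e. unless \<open>\<phi>\<close> acts trivially on \<open>\<Gamma>\<close>.\<close>

lemma (in group) inv_mult_cancel_left [simp]:
  "x \<in> carrier G \<Longrightarrow> y \<in> carrier G \<Longrightarrow> inv x \<otimes> (x \<otimes> y) = y"
  by (simp add: m_assoc[symmetric])

lemma (in group) fully_characteristic_imp_normal:
  assumes "fully_characteristic G K"
  shows "K \<lhd> G"
proof -
  have K: "subgroup K G" and fc: "\<And>\<psi>. \<psi> \<in> hom G G \<Longrightarrow> \<psi> ` K \<subseteq> K"
    using assms by (auto simp add: fully_characteristic_def)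
  have "(\<lambda>h. x \<otimes> h \<otimes> inv x) \<in> hom G G" if "x \<in> carrier G" for x
    using that by (intro homI) (simp_all add: m_assoc)
  then show ?thesis
    unfolding normal_inv_iff using K fc by blast
qed

lemma (in group) subgroup_mult_mem_iff:
  assumes "subgroup K G" "a \<in> K" "b \<in> carrier G"
  shows "a \<otimes> b \<in> K \<longleftrightarrow> b \<in> K"
proof
  assume "a \<otimes> b \<in> K"
  then have "inv a \<otimes> (a \<otimes> b) \<in> K"
    using assms by (simp add: subgroup.m_closed subgroup.m_inv_closed)
  then show "b \<in> K"
    using assms by (simp add: subgroup.mem_carrier m_assoc[symmetric])
qed (use assms in \<open>simp add: subgroup.m_closed\<close>)

lemma (in group) finite_index_pow_mem:
  assumes K: "subgroup K G" and fin: "finite (rcosets K)" and x: "x \<in> carrier G"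
  shows "\<exists>p::nat. 0 < p \<and> x [^] p \<in> K"
proof -
  let ?m = "card (rcosets K)"
  have "(\<lambda>r. K #> x [^] r) ` {..?m} \<subseteq> rcosets K"
    using rcosetsI[OF subgroup.subset[OF K]] x by auto
  then have "\<not> inj_on (\<lambda>r. K #> x [^] r) {..?m}"
    using card_inj_on_le[OF _ _ fin] by (metis card_atMost not_less_eq_eq order_refl)
  then obtain a b :: nat where "a \<noteq> b" "K #> x [^] a = K #> x [^] b"
    unfolding inj_on_def by blast
  then obtain a b :: nat where "a < b" and ab: "K #> x [^] a = K #> x [^] b"
    by (metis linorder_neqE_nat)
  have "x [^] b \<otimes> inv (x [^] a) \<in> K"
    using repr_independenceD[OF K _ ab] x by (simp add: subgroup.rcos_module_imp[OF K is_group])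
  moreover have "x [^] b = x [^] (b - a) \<otimes> x [^] a"
    using \<open>a < b\<close> nat_pow_mult[OF x, of "b - a" a] by simp
  then have "x [^] b \<otimes> inv (x [^] a) = x [^] (b - a)"
    by (metis inv_solve_right' nat_pow_closed x)
  ultimately have "x [^] (b - a) \<in> K"
    by simp
  then show ?thesis
    using \<open>a < b\<close> by (intro exI[of _ "b - a"]) simp
qed

lemma hom_integer_group_derived:
  assumes "group H" "f \<in> hom H integer_group" "d \<in> derived H (carrier H)"
  shows "f d = 0"
proof -
  interpret group_hom H integer_group f
    using assms(1,2) by (simp add: group_hom_def group_hom_axioms_def)
  have "f ` derived H (carrier H) = derived integer_group (f ` carrier H)"
    by (simp add: derived_img)
  also have "\<dots> = {0}"
    using comm_group.derived_eq_singleton[OF abelian_integer_group] by simp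
  finally show ?thesis
    using assms(3) by blast
qed

lemma (in group) quot_endo_moves_coset:
  assumes "K \<lhd> G" "\<phi> \<in> hom G G"
    and "C \<in> carrier (G Mod K)" "quot_endo G K \<phi> C \<noteq> C"
  shows "\<exists>g\<in>carrier G. inv g \<otimes> \<phi> g \<notin> K"
proof -
  interpret normal K G
    by (rule assms(1))
  obtain c where c: "c \<in> carrier G" "C = K #> c"
    using assms(3) unfolding FactGroup_def RCOSETS_def by auto
  define g where "g = (SOME g. g \<in> C)"
  have "g \<in> C"
    unfolding g_def using c rcos_self[OF c(1) subgroup_axioms] by (metis someI)
  then have g: "g \<in> carrier G" "C = K #> g"
    using c elemrcos_carrier repr_independence[OF _ c(1) subgroup_axioms] by auto
  have "\<phi> g \<in> carrier G"
    using assms(2) g(1) by (simp add: hom_in_carrier)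
  have "K #> \<phi> g \<noteq> K #> g"
    using assms(4) g(2) unfolding quot_endo_def g_def by simp
  then have "\<phi> g \<otimes> inv g \<notin> K"
    using g(1) \<open>\<phi> g \<in> carrier G\<close> by (metis repr_independence rcos_module_rev subgroup_axioms is_group)
  moreover have "g \<otimes> (inv g \<otimes> \<phi> g) \<otimes> inv g = \<phi> g \<otimes> inv g"
    using g(1) \<open>\<phi> g \<in> carrier G\<close> by (simp add: m_assoc[symmetric])
  ultimately show ?thesis
    using g(1) inv_op_closed2 by metis
qed

lemma (in group) ab_endo_id_imp_hom_invariant:
  assumes K: "subgroup K G" and \<phi>: "\<phi> \<in> hom G G" "\<phi> ` K \<subseteq> K"
    and ab_id: "\<forall>C\<in>carrier (abelianization_sub G K). ab_endo G K \<phi> C = C"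
    and f: "f \<in> hom (G\<lparr>carrier := K\<rparr>) integer_group" and k: "k \<in> K"
  shows "f (\<phi> k) = f k"
proof -
  let ?H = "G\<lparr>carrier := K\<rparr>"
  define D where "D = derived ?H K"
  have H: "group ?H"
    by (rule subgroup_imp_group[OF K])
  have f_mult: "f (x \<otimes> y) = f x + f y" if "x \<in> K" "y \<in> K" for x y
    using hom_mult[OF f, of x y] that by simp
  have f\<phi>: "f \<circ> \<phi> \<in> hom ?H integer_group"
  proof (rule homI)
    fix x y assume "x \<in> carrier ?H" "y \<in> carrier ?H"
    then show "(f \<circ> \<phi>) (x \<otimes>\<^bsub>?H\<^esub> y) = (f \<circ> \<phi>) x \<otimes>\<^bsub>integer_group\<^esub> (f \<circ> \<phi>) y"
      using \<phi> f_mult subgroup.mem_carrier[OF K] by (auto simp: hom_mult image_subset_iff)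
  qed simp
  have D: "d \<in> K" "f d = 0" "f (\<phi> d) = 0" if "d \<in> D" for d
    using that group.derived_in_carrier[OF H, of K]
      hom_integer_group_derived[OF H f] hom_integer_group_derived[OF H f\<phi>]
    by (auto simp: D_def)
  have "\<one> \<in> D"
    using generate.one[of ?H] by (simp add: D_def derived_def)
  then have mem_coset: "x \<in> D #> x" if "x \<in> carrier G" for x
    using that l_one unfolding r_coset_def by force
  have Dk: "D #> k \<in> carrier (abelianization_sub G K)"
    using k by (auto simp: abelianization_sub_def FactGroup_def RCOSETS_def D_def r_coset_def)
  have \<phi>_coset: "D #> \<phi> (SOME x. x \<in> D #> k) = D #> k"
    using ab_id[rule_format, OF Dk] unfolding ab_endo_def D_def[symmetric]
    by (simp add: r_coset_def)
  define k' where "k' = (SOME x. x \<in> D #> k)"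
  have "k' \<in> D #> k"
    unfolding k'_def using mem_coset[OF subgroup.mem_carrier[OF K k]] by (rule someI)
  then obtain d where d: "d \<in> D" "k' = d \<otimes> k"
    unfolding r_coset_def by blast
  then have "k' \<in> K"
    using D(1) k K by (simp add: subgroup.m_closed)
  then have "\<phi> k' \<in> D #> k"
    using mem_coset[of "\<phi> k'"] \<phi>_coset[folded k'_def] \<phi> K
    by (auto intro: hom_in_carrier subgroup.mem_carrier)
  then obtain d' where d': "d' \<in> D" "\<phi> k' = d' \<otimes> k"
    unfolding r_coset_def by blast
  have "f (\<phi> k') = f k"
    using d' D f_mult k by simp
  moreover have "f (\<phi> k') = f (\<phi> k)"
    using d D f_mult k \<phi> K by (simp add: hom_mult subgroup.mem_carrier image_subset_iff)
  ultimately show ?thesis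
    by simp
qed

section \<open>The free group as reduced words\<close>

definition cons_reduce :: "letter \<Rightarrow> letter list \<Rightarrow> letter list" where
  "cons_reduce a w =
     (case w of [] \<Rightarrow> [a] | b # w' \<Rightarrow> (if b = inv_letter a then w' else a # b # w'))"

lemma free_reduce_Cons [simp]: "free_reduce (a # w) = cons_reduce a (free_reduce w)"
  by (simp add: cons_reduce_def)

declare free_reduce.simps(2) [simp del]

lemma inv_letter_inv_letter [simp]: "inv_letter (inv_letter a) = a"
  by (simp add: inv_letter_def)

lemma inv_letter_neq [simp]: "inv_letter a \<noteq> a" "a \<noteq> inv_letter a"
  by (auto simp add: inv_letter_def prod_eq_iff)

lemma fst_inv_letter [simp]: "fst (inv_letter a) = fst a"
  and snd_inv_letter [simp]: "snd (inv_letter a) = (\<not> snd a)"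
  by (simp_all add: inv_letter_def)

lemma reduced_word_Nil [simp]: "reduced_word []"
  by (simp add: reduced_word_def)

lemma reduced_word_Cons:
  "reduced_word (a # w) \<longleftrightarrow> reduced_word w \<and> (w = [] \<or> hd w \<noteq> inv_letter a)"
  by (cases w) (auto simp add: reduced_word_def nth_Cons split: nat.splits)

lemma reduced_word_cons_reduce: "reduced_word w \<Longrightarrow> reduced_word (cons_reduce a w)"
  by (auto simp add: cons_reduce_def reduced_word_Cons split: list.splits)

lemma reduced_word_free_reduce: "reduced_word (free_reduce w)"
  by (induction w) (auto simp add: reduced_word_cons_reduce)

lemma free_reduce_reduced: "reduced_word w \<Longrightarrow> free_reduce w = w"
  by (induction w) (auto simp add: cons_reduce_def reduced_word_Cons split: list.splits)

lemma free_reduce_idem [simp]: "free_reduce (free_reduce w) = free_reduce w"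
  by (simp add: free_reduce_reduced reduced_word_free_reduce)

lemma cons_reduce_inv_letter: "reduced_word w \<Longrightarrow> cons_reduce a (cons_reduce (inv_letter a) w) = w"
  by (cases w) (auto simp add: cons_reduce_def reduced_word_Cons split: list.splits)

lemma set_free_reduce: "set (free_reduce w) \<subseteq> set w"
  by (induction w) (auto simp add: cons_reduce_def split: list.splits)

lemma free_reduce_append_right: "free_reduce (u @ v) = free_reduce (u @ free_reduce v)"
  by (induction u) auto

lemma free_reduce_append_eq_foldr: "free_reduce (u @ v) = foldr cons_reduce u (free_reduce v)"
  by (induction u) auto

lemma reduced_word_foldr_cons_reduce: "reduced_word z \<Longrightarrow> reduced_word (foldr cons_reduce y z)"
  by (induction y) (auto simp add: reduced_word_cons_reduce)

lemma cons_reduce_foldr: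
  assumes "reduced_word z"
  shows "cons_reduce a (foldr cons_reduce y z) = foldr cons_reduce (cons_reduce a y) z"
proof (cases "y \<noteq> [] \<and> hd y = inv_letter a")
  case True
  then obtain y' where y: "y = inv_letter a # y'"
    by (cases y) auto
  show ?thesis
    using cons_reduce_inv_letter[OF reduced_word_foldr_cons_reduce[OF assms]]
    by (simp add: y cons_reduce_def)
next
  case False
  then show ?thesis
    by (cases y) (auto simp add: cons_reduce_def)
qed

lemma foldr_cons_reduce_free_reduce:
  "reduced_word z \<Longrightarrow> foldr cons_reduce (free_reduce u) z = foldr cons_reduce u z"
  by (induction u) (simp_all add: cons_reduce_foldr[symmetric])

lemma free_reduce_append_left: "free_reduce (u @ v) = free_reduce (free_reduce u @ v)"
  by (simp add: free_reduce_append_eq_foldr foldr_cons_reduce_free_reduce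
      reduced_word_free_reduce)

lemma free_reduce_assoc:
  "free_reduce (free_reduce (u @ v) @ w) = free_reduce (u @ free_reduce (v @ w))"
  by (metis append_assoc free_reduce_append_left free_reduce_append_right)

lemma free_reduce_inverse_append: "free_reduce (rev (map inv_letter w) @ w) = []"
proof (induction w)
  case (Cons a w)
  have "free_reduce (inv_letter a # a # w) = free_reduce w"
    using cons_reduce_inv_letter[OF reduced_word_free_reduce, of "inv_letter a" w] by simp
  then show ?case
    using Cons free_reduce_append_right[of "rev (map inv_letter w)" "inv_letter a # a # w"]
      free_reduce_append_right[of "rev (map inv_letter w)" w]
    by simp
qed simp

lemma carrier_free_group:
  "carrier (free_group n) = {w. reduced_word w \<and> (\<forall>a\<in>set w. fst a < n)}"
  and mult_free_group: "x \<otimes>\<^bsub>free_group n\<^esub> y = free_reduce (x @ y)"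
  and one_free_group: "\<one>\<^bsub>free_group n\<^esub> = []"
  by (simp_all add: free_group_def)

lemma free_reduce_in_free_group:
  "\<forall>a\<in>set w. fst a < n \<Longrightarrow> free_reduce w \<in> carrier (free_group n)"
  using set_free_reduce[of w] by (auto simp add: carrier_free_group reduced_word_free_reduce)

lemma group_free_group: "group (free_group n)"
proof (rule groupI)
  fix x y assume "x \<in> carrier (free_group n)" "y \<in> carrier (free_group n)"
  then show "x \<otimes>\<^bsub>free_group n\<^esub> y \<in> carrier (free_group n)"
    unfolding mult_free_group by (intro free_reduce_in_free_group) (auto simp: carrier_free_group)
next
  fix x assume x: "x \<in> carrier (free_group n)"
  then show "\<one>\<^bsub>free_group n\<^esub> \<otimes>\<^bsub>free_group n\<^esub> x = x"
    by (simp add: carrier_free_group mult_free_group one_free_group free_reduce_reduced)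
  have "free_reduce (rev (map inv_letter x)) \<otimes>\<^bsub>free_group n\<^esub> x = \<one>\<^bsub>free_group n\<^esub>"
    by (simp add: mult_free_group one_free_group free_reduce_append_left[symmetric]
        free_reduce_inverse_append)
  moreover have "free_reduce (rev (map inv_letter x)) \<in> carrier (free_group n)"
    using x by (intro free_reduce_in_free_group) (auto simp: carrier_free_group)
  ultimately show "\<exists>y\<in>carrier (free_group n). y \<otimes>\<^bsub>free_group n\<^esub> x = \<one>\<^bsub>free_group n\<^esub>"
    by blast
qed (simp_all add: carrier_free_group mult_free_group one_free_group free_reduce_assoc)

definition gen_pow :: "nat \<Rightarrow> nat \<Rightarrow> letter list" where
  "gen_pow i r = replicate r (i, True)"

lemma reduced_word_gen_pow: "reduced_word (gen_pow i r)"
  by (simp add: reduced_word_def gen_pow_def inv_letter_def)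

lemma gen_pow_in_free_group: "i < n \<Longrightarrow> gen_pow i r \<in> carrier (free_group n)"
  by (simp add: carrier_free_group reduced_word_gen_pow) (simp add: gen_pow_def)

lemma gen_pow_eq_nat_pow:
  "gen_pow i r = [(i, True)] [^]\<^bsub>free_group n\<^esub> r"
proof (induction r)
  case (Suc r)
  have "gen_pow i (Suc r) = free_reduce (gen_pow i r @ [(i, True)])"
    using free_reduce_reduced[OF reduced_word_gen_pow, of i "Suc r"]
    by (simp add: gen_pow_def replicate_append_same)
  then show ?case
    using Suc by (simp add: mult_free_group)
qed (simp add: gen_pow_def one_free_group)

definition delete_gen :: "nat \<Rightarrow> letter list \<Rightarrow> letter list" where
  "delete_gen j w = free_reduce (filter (\<lambda>a. fst a \<noteq> j) w)"

lemma free_reduce_filter_free_reduce: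
  assumes "\<And>b. Q (inv_letter b) = Q b"
  shows "free_reduce (filter Q (free_reduce w)) = free_reduce (filter Q w)"
proof (induction w)
  case (Cons a w)
  have "free_reduce (filter Q (cons_reduce a z)) = free_reduce (filter Q (a # z))" for z
  proof (cases "z \<noteq> [] \<and> hd z = inv_letter a")
    case True
    then obtain z' where z: "z = inv_letter a # z'"
      by (cases z) auto
    have "cons_reduce a (cons_reduce (inv_letter a) (free_reduce (filter Q z'))) =
        free_reduce (filter Q z')"
      by (rule cons_reduce_inv_letter[OF reduced_word_free_reduce])
    then show ?thesis
      using assms[of a] by (simp add: z cons_reduce_def)
  next
    case False
    then show ?thesis
      by (cases z) (auto simp add: cons_reduce_def)
  qed
  with Cons show ?case
    by simp
qed simp

lemma delete_gen_hom: "delete_gen j \<in> hom (free_group n) (free_group n)"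
proof (rule homI)
  fix x assume "x \<in> carrier (free_group n)"
  then show "delete_gen j x \<in> carrier (free_group n)"
    unfolding delete_gen_def by (intro free_reduce_in_free_group) (auto simp: carrier_free_group)
next
  fix x y
  let ?f = "filter (\<lambda>a. fst a \<noteq> j)"
  have "delete_gen j (x \<otimes>\<^bsub>free_group n\<^esub> y) = free_reduce (?f x @ ?f y)"
    by (simp add: delete_gen_def mult_free_group free_reduce_filter_free_reduce)
  also have "\<dots> = delete_gen j x \<otimes>\<^bsub>free_group n\<^esub> delete_gen j y"
    unfolding delete_gen_def mult_free_group
    by (metis free_reduce_append_left free_reduce_append_right)
  finally show "delete_gen j (x \<otimes>\<^bsub>free_group n\<^esub> y) = delete_gen j x \<otimes>\<^bsub>free_group n\<^esub> delete_gen j y" .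
qed

lemma delete_gen_gen_pow: "delete_gen j (gen_pow i r) = (if i = j then [] else gen_pow i r)"
  using free_reduce_reduced[OF reduced_word_gen_pow, of i r]
  by (simp add: delete_gen_def gen_pow_def)

section \<open>Counting edges in the cover\<close>

text \<open>\<open>edge_count P i u w\<close> follows the path of \<open>w\<close> in the Cayley tree of \<open>F\<^sub>n\<close> from
  the vertex \<open>u\<close> and counts, with sign, its traversals of \<open>x\<^sub>i\<close>-edges whose initial vertex
  satisfies \<open>P\<close>. For \<open>P\<close> invariant under left multiplication by \<open>K\<close>, \<open>P\<close> is a set of
  vertices of \<open>X\<close> and on \<open>K\<close> this evaluates a cellular 1-cochain of \<open>X\<close> on loops.\<close>

fun edge_count :: "(letter list \<Rightarrow> bool) \<Rightarrow> nat \<Rightarrow> letter list \<Rightarrow> letter list \<Rightarrow> int" where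
  "edge_count P i u [] = 0"
| "edge_count P i u (a # w) =
     (if fst a = i then
        (if snd a then (if P u then 1 else 0)
         else (if P (free_reduce (u @ [a])) then -1 else 0))
      else 0)
     + edge_count P i (free_reduce (u @ [a])) w"

lemma edge_count_append:
  "reduced_word u \<Longrightarrow>
    edge_count P i u (xs @ ys) = edge_count P i u xs + edge_count P i (free_reduce (u @ xs)) ys"
proof (induction xs arbitrary: u)
  case (Cons a xs)
  have "free_reduce (free_reduce (u @ [a]) @ xs) = free_reduce (u @ a # xs)"
    by (metis append_Cons append_Nil append_assoc free_reduce_append_left)
  then show ?case
    using Cons.IH[of "free_reduce (u @ [a])"] by (simp add: reduced_word_free_reduce)
qed (simp add: free_reduce_reduced)

lemma free_reduce_snoc_inv_letter:
  "reduced_word u \<Longrightarrow> free_reduce (free_reduce (u @ [a]) @ [inv_letter a]) = u"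
  using free_reduce_assoc[of u "[a]" "[inv_letter a]"]
  by (simp add: cons_reduce_def free_reduce_reduced)

lemma edge_count_cons_reduce:
  assumes "reduced_word u"
  shows "edge_count P i u (cons_reduce a z) = edge_count P i u (a # z)"
proof (cases "z \<noteq> [] \<and> hd z = inv_letter a")
  case True
  then obtain z' where z: "z = inv_letter a # z'"
    by (cases z) auto
  show ?thesis
    using free_reduce_snoc_inv_letter[OF assms, of a]
    by (cases "snd a") (simp_all add: z cons_reduce_def)
next
  case False
  then show ?thesis
    by (cases z) (auto simp add: cons_reduce_def)
qed

lemma edge_count_free_reduce:
  "reduced_word u \<Longrightarrow> edge_count P i u (free_reduce w) = edge_count P i u w"
proof (induction w arbitrary: u)
  case (Cons a w)
  then show ?case
    using Cons.IH[of "free_reduce (u @ [a])"]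
    by (simp add: edge_count_cons_reduce reduced_word_free_reduce)
qed simp

lemma edge_count_shift:
  "edge_count P i (free_reduce (u @ u')) x = edge_count (\<lambda>v. P (free_reduce (u @ v))) i u' x"
proof (induction x arbitrary: u')
  case (Cons a x)
  have "free_reduce (free_reduce (u @ u') @ [a]) = free_reduce (u @ free_reduce (u' @ [a]))"
    by (metis append_assoc free_reduce_append_left free_reduce_append_right)
  then show ?case
    using Cons.IH[of "free_reduce (u' @ [a])"] by simp
qed simp

lemma edge_count_cong:
  assumes "x \<in> carrier (free_group n)" "u \<in> carrier (free_group n)"
    and "\<And>v. v \<in> carrier (free_group n) \<Longrightarrow> P v = P' v"
  shows "edge_count P i u x = edge_count P' i u x"
  using assms
proof (induction x arbitrary: u)
  case (Cons a x)
  have "x \<in> carrier (free_group n)"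
    using Cons.prems(1) by (simp add: carrier_free_group reduced_word_Cons)
  moreover have "free_reduce (u @ [a]) \<in> carrier (free_group n)"
    using Cons.prems(1,2) by (intro free_reduce_in_free_group) (auto simp: carrier_free_group)
  ultimately show ?case
    using Cons.IH Cons.prems(2,3) by simp
qed simp

lemma edge_count_gen_pow:
  "edge_count P i [] (gen_pow i m) = (\<Sum>r<m. if P (gen_pow i r) then 1 else 0)"
proof (induction m)
  case (Suc m)
  have "gen_pow i (Suc m) = gen_pow i m @ [(i, True)]"
    by (simp add: gen_pow_def replicate_append_same)
  then show ?case
    using Suc edge_count_append[of "[]" P i "gen_pow i m" "[(i, True)]"]
    by (simp add: free_reduce_reduced reduced_word_gen_pow)
qed (simp add: gen_pow_def)

lemma edge_count_mult:
  assumes "x \<in> carrier (free_group n)"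
  shows "edge_count P i [] (x \<otimes>\<^bsub>free_group n\<^esub> y) =
    edge_count P i [] x + edge_count (\<lambda>v. P (x \<otimes>\<^bsub>free_group n\<^esub> v)) i [] y"
proof -
  have "reduced_word x"
    using assms by (simp add: carrier_free_group)
  then show ?thesis
    using edge_count_append[of "[]" P i x y] edge_count_shift[of P i x "[]" y]
    by (simp add: mult_free_group edge_count_free_reduce free_reduce_reduced)
qed

definition left_invariant :: "nat \<Rightarrow> letter list set \<Rightarrow> (letter list \<Rightarrow> bool) \<Rightarrow> bool" where
  "left_invariant n K P \<longleftrightarrow>
     (\<forall>k\<in>K. \<forall>v\<in>carrier (free_group n). P (k \<otimes>\<^bsub>free_group n\<^esub> v) = P v)"

lemma left_invariant_mem:
  "subgroup K (free_group n) \<Longrightarrow> left_invariant n K (\<lambda>v. v \<in> K)"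
  by (simp add: left_invariant_def group.subgroup_mult_mem_iff[OF group_free_group])

lemma left_invariant_translate:
  assumes N: "K \<lhd> free_group n" and P: "left_invariant n K P"
    and x: "x \<in> carrier (free_group n)"
  shows "left_invariant n K (\<lambda>v. P (x \<otimes>\<^bsub>free_group n\<^esub> v))"
  unfolding left_invariant_def
proof (intro ballI)
  let ?F = "free_group n"
  interpret normal K ?F
    by (rule N)
  fix k v assume k: "k \<in> K" and v: "v \<in> carrier ?F"
  have kc: "k \<in> carrier ?F"
    using k by (rule mem_carrier)
  have "x \<otimes>\<^bsub>?F\<^esub> (k \<otimes>\<^bsub>?F\<^esub> v) =
      (x \<otimes>\<^bsub>?F\<^esub> k \<otimes>\<^bsub>?F\<^esub> inv\<^bsub>?F\<^esub> x) \<otimes>\<^bsub>?F\<^esub> (x \<otimes>\<^bsub>?F\<^esub> v)"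
    using x v kc by (simp add: m_assoc)
  moreover have "x \<otimes>\<^bsub>?F\<^esub> k \<otimes>\<^bsub>?F\<^esub> inv\<^bsub>?F\<^esub> x \<in> K"
    using x k by (rule inv_op_closed2)
  ultimately show "P (x \<otimes>\<^bsub>?F\<^esub> (k \<otimes>\<^bsub>?F\<^esub> v)) = P (x \<otimes>\<^bsub>?F\<^esub> v)"
    using P x v unfolding left_invariant_def by simp
qed

lemma edge_count_hom:
  assumes K: "subgroup K (free_group n)" and P: "left_invariant n K P"
  shows "(\<lambda>k. edge_count P i [] k) \<in> hom (free_group n\<lparr>carrier := K\<rparr>) integer_group"
proof (rule homI)
  fix k k' assume "k \<in> carrier (free_group n\<lparr>carrier := K\<rparr>)" "k' \<in> carrier (free_group n\<lparr>carrier := K\<rparr>)"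
  then have k: "k \<in> K" "k \<in> carrier (free_group n)" and k': "k' \<in> carrier (free_group n)"
    using subgroup.mem_carrier[OF K] by auto
  have "edge_count (\<lambda>v. P (k \<otimes>\<^bsub>free_group n\<^esub> v)) i [] k' = edge_count P i [] k'"
    using P k(1) by (intro edge_count_cong[OF k']) (simp_all add: left_invariant_def carrier_free_group)
  then show "edge_count P i [] (k \<otimes>\<^bsub>free_group n\<lparr>carrier := K\<rparr>\<^esub> k') =
      edge_count P i [] k \<otimes>\<^bsub>integer_group\<^esub> edge_count P i [] k'"
    using edge_count_mult[OF k(2)] by simp
qed simp

lemma edge_count_conj:
  assumes N: "K \<lhd> free_group n" and P: "left_invariant n K P"
    and g: "g \<in> carrier (free_group n)" and k: "k \<in> K"
  shows "edge_count P i [] (g \<otimes>\<^bsub>free_group n\<^esub> k \<otimes>\<^bsub>free_group n\<^esub> inv\<^bsub>free_group n\<^esub> g) =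
    edge_count (\<lambda>v. P (g \<otimes>\<^bsub>free_group n\<^esub> v)) i [] k"
proof -
  let ?F = "free_group n"
  let ?Pg = "\<lambda>v. P (g \<otimes>\<^bsub>?F\<^esub> v)"
  interpret normal K ?F
    by (rule N)
  have kc: "k \<in> carrier ?F"
    using k by (rule mem_carrier)
  have "edge_count (\<lambda>v. ?Pg (k \<otimes>\<^bsub>?F\<^esub> v)) i [] (inv\<^bsub>?F\<^esub> g) = edge_count ?Pg i [] (inv\<^bsub>?F\<^esub> g)"
    using left_invariant_translate[OF N P g] k unfolding left_invariant_def
    by (intro edge_count_cong[OF inv_closed[OF g]]) (simp_all add: carrier_free_group)
  moreover have "edge_count P i [] g + edge_count ?Pg i [] (inv\<^bsub>?F\<^esub> g) = 0"
    using edge_count_mult[OF g, of P i "inv\<^bsub>?F\<^esub> g"] g by (simp add: one_free_group)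
  ultimately show ?thesis
    using edge_count_mult[OF g, of P i "k \<otimes>\<^bsub>?F\<^esub> inv\<^bsub>?F\<^esub> g"]
      edge_count_mult[OF kc, of ?Pg i "inv\<^bsub>?F\<^esub> g"]
    by (simp add: m_assoc g kc)
qed

lemma edge_count_translate_hom_invariant:
  assumes N: "K \<lhd> free_group n"
    and \<phi>: "\<phi> \<in> hom (free_group n) (free_group n)" "\<phi> ` K \<subseteq> K"
    and count_inv: "\<And>P i k. left_invariant n K P \<Longrightarrow> k \<in> K \<Longrightarrow>
      edge_count P i [] (\<phi> k) = edge_count P i [] k"
    and P: "left_invariant n K P" and g: "g \<in> carrier (free_group n)" and k: "k \<in> K"
  shows "edge_count (\<lambda>v. P (g \<otimes>\<^bsub>free_group n\<^esub> v)) i [] k =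
    edge_count (\<lambda>v. P (\<phi> g \<otimes>\<^bsub>free_group n\<^esub> v)) i [] k"
proof -
  let ?F = "free_group n"
  interpret normal K ?F
    by (rule N)
  interpret \<phi>: group_hom ?F ?F \<phi>
    using \<phi>(1) by (simp add: group_hom_def group_hom_axioms_def group_free_group)
  have kc: "k \<in> carrier ?F" and \<phi>k: "\<phi> k \<in> K" and \<phi>g: "\<phi> g \<in> carrier ?F"
    using k \<phi>(2) g by (auto intro: mem_carrier)
  have "edge_count (\<lambda>v. P (g \<otimes>\<^bsub>?F\<^esub> v)) i [] k =
      edge_count P i [] (g \<otimes>\<^bsub>?F\<^esub> k \<otimes>\<^bsub>?F\<^esub> inv\<^bsub>?F\<^esub> g)"
    by (rule edge_count_conj[symmetric, OF N P g k])
  also have "\<dots> = edge_count P i [] (\<phi> (g \<otimes>\<^bsub>?F\<^esub> k \<otimes>\<^bsub>?F\<^esub> inv\<^bsub>?F\<^esub> g))"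
    by (rule count_inv[symmetric, OF P inv_op_closed2[OF g k]])
  also have "\<phi> (g \<otimes>\<^bsub>?F\<^esub> k \<otimes>\<^bsub>?F\<^esub> inv\<^bsub>?F\<^esub> g) = \<phi> g \<otimes>\<^bsub>?F\<^esub> \<phi> k \<otimes>\<^bsub>?F\<^esub> inv\<^bsub>?F\<^esub> \<phi> g"
    using g kc by simp
  also have "edge_count P i [] \<dots> = edge_count (\<lambda>v. P (\<phi> g \<otimes>\<^bsub>?F\<^esub> v)) i [] (\<phi> k)"
    by (rule edge_count_conj[OF N P \<phi>g \<phi>k])
  also have "\<dots> = edge_count (\<lambda>v. P (\<phi> g \<otimes>\<^bsub>?F\<^esub> v)) i [] k"
    by (rule count_inv[OF left_invariant_translate[OF N P \<phi>g] k])
  finally show ?thesis .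
qed

lemma edge_count_mem_translate:
  assumes N: "K \<lhd> free_group n"
    and \<phi>: "\<phi> \<in> hom (free_group n) (free_group n)" "\<phi> ` K \<subseteq> K"
    and count_inv: "\<And>P i k. left_invariant n K P \<Longrightarrow> k \<in> K \<Longrightarrow>
      edge_count P i [] (\<phi> k) = edge_count P i [] k"
    and g: "g \<in> carrier (free_group n)" and k: "k \<in> K"
  shows "edge_count (\<lambda>v. v \<in> K) i [] k =
    edge_count (\<lambda>v. inv\<^bsub>free_group n\<^esub> g \<otimes>\<^bsub>free_group n\<^esub> \<phi> g \<otimes>\<^bsub>free_group n\<^esub> v \<in> K) i [] k"
proof -
  let ?F = "free_group n"
  let ?P = "\<lambda>v. inv\<^bsub>?F\<^esub> g \<otimes>\<^bsub>?F\<^esub> v \<in> K"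
  interpret normal K ?F
    by (rule N)
  have kc: "k \<in> carrier ?F"
    using k by (rule mem_carrier)
  have \<phi>g: "\<phi> g \<in> carrier ?F"
    using \<phi>(1) g by (rule hom_in_carrier)
  have nil: "[] \<in> carrier ?F"
    by (simp add: carrier_free_group)
  have P: "left_invariant n K ?P"
    using left_invariant_translate[OF N left_invariant_mem[OF subgroup_axioms] inv_closed[OF g]] .
  have "edge_count (\<lambda>v. v \<in> K) i [] k = edge_count (\<lambda>v. ?P (g \<otimes>\<^bsub>?F\<^esub> v)) i [] k"
    using g by (intro edge_count_cong[OF kc nil]) simp
  also have "\<dots> = edge_count (\<lambda>v. ?P (\<phi> g \<otimes>\<^bsub>?F\<^esub> v)) i [] k"
    by (rule edge_count_translate_hom_invariant[OF N \<phi> count_inv P g k])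
  also have "\<dots> = edge_count (\<lambda>v. inv\<^bsub>?F\<^esub> g \<otimes>\<^bsub>?F\<^esub> \<phi> g \<otimes>\<^bsub>?F\<^esub> v \<in> K) i [] k"
    using g \<phi>g by (intro edge_count_cong[OF kc nil]) (simp add: m_assoc)
  finally show ?thesis .
qed

definition gen_period :: "letter list set \<Rightarrow> nat \<Rightarrow> nat" where
  "gen_period K i = (LEAST p. 0 < p \<and> gen_pow i p \<in> K)"

lemma gen_period:
  assumes "subgroup K (free_group n)" "finite (rcosets\<^bsub>free_group n\<^esub> K)" "i < n"
  shows "0 < gen_period K i" "gen_pow i (gen_period K i) \<in> K"
proof -
  have "[(i, True)] \<in> carrier (free_group n)"
    using assms(3) by (simp add: carrier_free_group reduced_word_Cons)
  then obtain p where "0 < p \<and> gen_pow i p \<in> K"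
    using group.finite_index_pow_mem[OF group_free_group assms(1,2)]
    by (metis gen_pow_eq_nat_pow)
  then have "0 < gen_period K i \<and> gen_pow i (gen_period K i) \<in> K"
    unfolding gen_period_def by (rule LeastI)
  then show "0 < gen_period K i" "gen_pow i (gen_period K i) \<in> K"
    by simp_all
qed

lemma gen_pow_below_gen_period:
  "0 < r \<Longrightarrow> r < gen_period K i \<Longrightarrow> gen_pow i r \<notin> K"
  unfolding gen_period_def by (blast dest: not_less_Least)

lemma edge_count_gen_period:
  assumes "subgroup K (free_group n)" "finite (rcosets\<^bsub>free_group n\<^esub> K)" "i < n"
  shows "edge_count (\<lambda>v. v \<in> K) i [] (gen_pow i (gen_period K i)) = 1"
proof -
  have "(if gen_pow i r \<in> K then 1 else 0) = (if r = 0 then 1 else (0::int))"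
    if "r < gen_period K i" for r
    using that gen_pow_below_gen_period[of r K i] subgroup.one_closed[OF assms(1)]
    by (simp add: gen_pow_def one_free_group)
  then show ?thesis
    using gen_period(1)[OF assms] by (simp add: edge_count_gen_pow)
qed

lemma translate_gen_pow_mem:
  assumes s: "s \<in> carrier (free_group n)" "s \<notin> K"
    and count: "edge_count (\<lambda>v. s \<otimes>\<^bsub>free_group n\<^esub> v \<in> K) i [] (gen_pow i p) \<noteq> 0"
  shows "\<exists>r. 0 < r \<and> r < p \<and> s \<otimes>\<^bsub>free_group n\<^esub> gen_pow i r \<in> K"
proof -
  have "\<exists>r<p. s \<otimes>\<^bsub>free_group n\<^esub> gen_pow i r \<in> K"
  proof (rule ccontr)
    assume "\<not> (\<exists>r<p. s \<otimes>\<^bsub>free_group n\<^esub> gen_pow i r \<in> K)"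
    then show False
      using count by (simp add: edge_count_gen_pow)
  qed
  then obtain r where r: "r < p" "s \<otimes>\<^bsub>free_group n\<^esub> gen_pow i r \<in> K"
    by blast
  have "s \<otimes>\<^bsub>free_group n\<^esub> gen_pow i 0 = s"
    using s(1) by (simp add: gen_pow_def mult_free_group carrier_free_group free_reduce_reduced)
  then have "r \<noteq> 0"
    using r(2) s(2) by metis
  with r show ?thesis
    by blast
qed

lemma fully_characteristic_translate_gen_pow:
  assumes K: "fully_characteristic (free_group n) K" and s: "s \<in> carrier (free_group n)"
    and s0: "s \<otimes>\<^bsub>free_group n\<^esub> gen_pow 0 r0 \<in> K"
    and s1: "s \<otimes>\<^bsub>free_group n\<^esub> gen_pow 1 r1 \<in> K"
    and "1 < n"
  shows "gen_pow 0 r0 \<in> K"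
proof -
  let ?F = "free_group n"
  interpret F: group ?F
    by (rule group_free_group)
  have sub: "subgroup K ?F" and del: "\<And>x. x \<in> K \<Longrightarrow> delete_gen 1 x \<in> K"
    using K delete_gen_hom[of 1 n] unfolding fully_characteristic_def by blast+
  have ds: "delete_gen 1 s \<in> carrier ?F"
    using delete_gen_hom s by (rule hom_in_carrier)
  have del_mult: "delete_gen 1 (s \<otimes>\<^bsub>?F\<^esub> gen_pow i r) =
      delete_gen 1 s \<otimes>\<^bsub>?F\<^esub> delete_gen 1 (gen_pow i r)" if "i < n" for i r
    using delete_gen_hom s gen_pow_in_free_group[OF that] by (rule hom_mult)
  have "delete_gen 1 s \<in> K"
    using del[OF s1] del_mult[OF \<open>1 < n\<close>] F.r_one[OF ds, unfolded one_free_group]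
    by (simp add: delete_gen_gen_pow)
  moreover have "delete_gen 1 s \<otimes>\<^bsub>?F\<^esub> gen_pow 0 r0 \<in> K"
    using del[OF s0] del_mult \<open>1 < n\<close> by (simp add: delete_gen_gen_pow)
  ultimately show ?thesis
    using F.subgroup_mult_mem_iff[OF sub] gen_pow_in_free_group \<open>1 < n\<close> by simp
qed

theorem corollary1p3:
  fixes n :: nat and \<phi> :: "letter list \<Rightarrow> letter list" and K :: "letter list set"
  assumes "n \<ge> 2"
    and "\<phi> \<in> hom (free_group n) (free_group n)"
    and "fully_characteristic (free_group n) K"
    and "finite (rcosets\<^bsub>free_group n\<^esub> K)"
    and "\<exists>C \<in> carrier (free_group n Mod K). quot_endo (free_group n) K \<phi> C \<noteq> C"
  shows "\<exists>C \<in> carrier (abelianization_sub (free_group n) K). ab_endo (free_group n) K \<phi> C \<noteq> C"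
proof (rule ccontr)
  let ?F = "free_group n"
  assume "\<not> ?thesis"
  then have ab_id: "\<forall>C\<in>carrier (abelianization_sub ?F K). ab_endo ?F K \<phi> C = C"
    by blast
  interpret F: group ?F
    by (rule group_free_group)
  have N: "K \<lhd> ?F" and K: "subgroup K ?F" and \<phi>K: "\<phi> ` K \<subseteq> K"
    using assms(2,3) F.fully_characteristic_imp_normal by (auto simp: fully_characteristic_def)
  obtain g where g: "g \<in> carrier ?F" and s: "inv\<^bsub>?F\<^esub> g \<otimes>\<^bsub>?F\<^esub> \<phi> g \<notin> K"
    using assms(5) F.quot_endo_moves_coset[OF N assms(2)] by blast
  let ?s = "inv\<^bsub>?F\<^esub> g \<otimes>\<^bsub>?F\<^esub> \<phi> g"
  have sc: "?s \<in> carrier ?F"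
    using g hom_in_carrier[OF assms(2)] by simp
  have count_inv: "edge_count P i [] (\<phi> k) = edge_count P i [] k"
    if "left_invariant n K P" "k \<in> K" for P i k
    using F.ab_endo_id_imp_hom_invariant[OF K assms(2) \<phi>K ab_id edge_count_hom[OF K that(1)] that(2)] .
  have meets: "\<exists>r. 0 < r \<and> r < gen_period K i \<and> ?s \<otimes>\<^bsub>?F\<^esub> gen_pow i r \<in> K" if "i < n" for i
    using edge_count_gen_period[OF K assms(4) that]
      edge_count_mem_translate[OF N assms(2) \<phi>K count_inv g gen_period(2)[OF K assms(4) that]]
    by (intro translate_gen_pow_mem[OF sc s]) simp
  have "1 < n"
    using assms(1) by simp
  then obtain r0 r1 where r0: "0 < r0" "r0 < gen_period K 0" "?s \<otimes>\<^bsub>?F\<^esub> gen_pow 0 r0 \<in> K"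
    and r1: "?s \<otimes>\<^bsub>?F\<^esub> gen_pow 1 r1 \<in> K"
    using meets[of 0] meets[of 1] by auto
  have "gen_pow 0 r0 \<in> K"
    by (rule fully_characteristic_translate_gen_pow[OF assms(3) sc r0(3) r1 \<open>1 < n\<close>])
  with r0 show False
    using gen_pow_below_gen_period by blast
qed

end
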